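(* Let $p,q$ be nonnegative integers, $a_1,\dots,a_p,b_1,\dots,b_q,d,e,f$ complex parameters and $x,y$ complex variables such that all series involved converge and all terms are defined. Then $$\sum_{n\ge0}\frac{(a_1)_n\cdots(a_p)_n(d)_n\,x^ny^n}{(b_1)_n\cdots(b_q)_n\,n!}\,{}_2F_2\!\left[\begin{matrix}d+n,\ e+2\\ f+1,\ e\end{matrix};x\right]=\sum_{n\ge0}\frac{(d)_n(e+2)_n\,x^n}{(f+1)_n(e)_n\,n!}\,{}_{p+3}F_{q+1}\!\left[\begin{matrix}-n,\ 1-e-n,\ -f-n,\ a_1,\dots,a_p\\ -1-e-n,\ b_1,\dots,b_q\end{matrix};y\right].$$
   Context: $(a)_k=a(a+1)\cdots(a+k-1)$ (with $(a)_0=1$) is the Pochhammer symbol. The generalized hypergeometric series is ${}_pF_q\!\left[\begin{matrix}a_1,\dots,a_p\\ b_1,\dots,b_q\end{matrix};z\right]=\sum_{k\ge0}\frac{(a_1)_k\cdots(a_p)_k}{(b_1)_k\cdots(b_q)_k}\frac{z^k}{k!}$; with a numerator parameter $-n$ ($n$ a nonnegative integer) it terminates after the $k=n$ term. *)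

theory Defs
  imports "HOL-Analysis.Analysis"
begin

definition hyp_term :: "complex list \<Rightarrow> complex list \<Rightarrow> complex \<Rightarrow> nat \<Rightarrow> complex" where
  "hyp_term as bs z k =
     (\<Prod>a\<leftarrow>as. pochhammer a k) / (\<Prod>b\<leftarrow>bs. pochhammer b k) * z ^ k / fact k"

definition hypF :: "complex list \<Rightarrow> complex list \<Rightarrow> complex \<Rightarrow> complex" where
  "hypF as bs z = (\<Sum>k. hyp_term as bs z k)"

end

theory Submission
  imports Defs
begin

text \<open>On the right, the factor \<open>(-m)\<^sub>j\<close> makes the inner series
  terminate at \<open>j \<le> m\<close>; writing \<open>m = n + k\<close>, \<open>j = n\<close> and reflecting the Pochhammer symbols with
  negative-integer shifts via \<open>(c - n - k)\<^sub>n = (-1)\<^sup>n (k + 1 - c)\<^sub>n\<close>, the \<open>(n+k, n)\<close> term on the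
  right equals the \<open>(n, k)\<close> term on the left. The signs cancel in pairs, and absolute
  summability allows both iterated sums to be read as one unordered sum.\<close>

lemma suminf_cmult_suminf_eq_infsum:
  fixes c :: "nat \<Rightarrow> complex" and g :: "nat \<Rightarrow> nat \<Rightarrow> complex"
  assumes summable: "(\<lambda>(n, k). c n * g n k) summable_on UNIV"
  shows "(\<Sum>n. c n * (\<Sum>k. g n k)) = (\<Sum>\<^sub>\<infinity>(n, k). c n * g n k)"
proof -
  have summable': "(\<lambda>(n, k). c n * g n k) summable_on Sigma UNIV (\<lambda>_. UNIV)"
    using summable by simp
  have row_summable: "(\<lambda>k. c n * g n k) summable_on UNIV" for n
    using summable_on_SigmaD1[of "\<lambda>n k. c n * g n k", OF summable'] by simp
  have row_sum: "c n * (\<Sum>k. g n k) = (\<Sum>\<^sub>\<infinity>k. c n * g n k)" for n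
  proof (cases "c n = 0")
    case False
    have sums_infsum: "(\<lambda>k. c n * g n k) sums (\<Sum>\<^sub>\<infinity>k. c n * g n k)"
      using has_sum_imp_sums[OF has_sum_infsum[OF row_summable]] .
    then have "summable (g n)"
      using False summable_cmult_iff sums_summable by blast
    then have "(\<lambda>k. c n * g n k) sums (c n * (\<Sum>k. g n k))"
      by (intro sums_mult summable_sums)
    then show ?thesis
      using sums_unique2 sums_infsum by blast
  qed simp
  have "(\<lambda>n. \<Sum>\<^sub>\<infinity>k. c n * g n k) summable_on UNIV"
    using summable_on_SigmaD[OF summable'] row_summable by simp
  then have "(\<lambda>n. \<Sum>\<^sub>\<infinity>k. c n * g n k) sums (\<Sum>\<^sub>\<infinity>n. \<Sum>\<^sub>\<infinity>k. c n * g n k)"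
    by (intro has_sum_imp_sums has_sum_infsum)
  then have "(\<Sum>n. c n * (\<Sum>k. g n k)) = (\<Sum>\<^sub>\<infinity>n. \<Sum>\<^sub>\<infinity>k. c n * g n k)"
    unfolding row_sum by (rule sums_unique[symmetric])
  also have "\<dots> = (\<Sum>\<^sub>\<infinity>(n, k). c n * g n k)"
    using infsum_Sigma_banach[OF summable'] by simp
  finally show ?thesis .
qed

lemma infsum_lower_triangle_reindex:
  fixes h :: "nat \<times> nat \<Rightarrow> 'a :: {comm_monoid_add, t2_space}"
  assumes "\<And>m j. m < j \<Longrightarrow> h (m, j) = 0"
  shows "(\<Sum>\<^sub>\<infinity>p. h p) = (\<Sum>\<^sub>\<infinity>(n, k). h (n + k, n))"
proof -
  have "(\<Sum>\<^sub>\<infinity>p. h p) = (\<Sum>\<^sub>\<infinity>p\<in>{(m, j). j \<le> m}. h p)"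
    by (rule infsum_cong_neutral) (use assms in \<open>auto simp: not_le\<close>)
  also have "\<dots> = (\<Sum>\<^sub>\<infinity>p. h ((\<lambda>(n, k). (n + k, n)) p))"
  proof (rule infsum_reindex_bij_betw[symmetric])
    show "bij_betw (\<lambda>(n, k). (n + k, n)) UNIV {(m, j). j \<le> (m::nat)}"
      by (rule bij_betw_byWitness[where f' = "\<lambda>(m, j). (j, m - j)"]) auto
  qed
  finally show ?thesis
    by (simp add: case_prod_unfold)
qed

lemma pochhammer_diff_of_nat_add:
  "pochhammer (c - of_nat (n + k)) n = (-1) ^ n * pochhammer (of_nat k + 1 - c :: 'a :: comm_ring_1) n"
  using pochhammer_minus[of "of_nat (n + k) - c" n] by (simp add: algebra_simps)

lemma hyp_term_reflection:
  fixes as bs :: "complex list" and d e f x y :: complex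
  assumes bs_nonzero: "(\<Prod>b\<leftarrow>bs. pochhammer b n) \<noteq> 0"
    and f_nonzero: "pochhammer (f + 1) (n + k) \<noteq> 0"
    and e_nonzero: "pochhammer e (n + k) \<noteq> 0"
    and e_reflected_nonzero: "pochhammer (-1 - e - of_nat (n + k)) n \<noteq> 0"
  shows "(\<Prod>a\<leftarrow>as. pochhammer a n) * pochhammer d n * x ^ n * y ^ n
           / ((\<Prod>b\<leftarrow>bs. pochhammer b n) * fact n)
         * hyp_term [d + of_nat n, e + 2] [f + 1, e] x k
       = pochhammer d (n + k) * pochhammer (e + 2) (n + k) * x ^ (n + k)
           / (pochhammer (f + 1) (n + k) * pochhammer e (n + k) * fact (n + k))
         * hyp_term ([- of_nat (n + k), 1 - e - of_nat (n + k), - f - of_nat (n + k)] @ as)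
                    ([-1 - e - of_nat (n + k)] @ bs) y n"
proof -
  have refl1: "pochhammer (- of_nat (n + k)) n = (-1) ^ n * pochhammer (of_nat k + 1 :: complex) n"
    using pochhammer_diff_of_nat_add[of 0 n k] by simp
  have refl2: "pochhammer (1 - e - of_nat (n + k)) n = (-1) ^ n * pochhammer (e + of_nat k) n"
    using pochhammer_diff_of_nat_add[of "1 - e" n k] by (simp add: algebra_simps)
  have refl3: "pochhammer (- f - of_nat (n + k)) n = (-1) ^ n * pochhammer (f + 1 + of_nat k) n"
    using pochhammer_diff_of_nat_add[of "- f" n k] by (simp add: algebra_simps)
  have refl4: "pochhammer (-1 - e - of_nat (n + k)) n = (-1) ^ n * pochhammer (e + 2 + of_nat k) n"
    using pochhammer_diff_of_nat_add[of "-1 - e" n k] by (simp add: algebra_simps)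
  have split_d: "pochhammer d (n + k) = pochhammer d n * pochhammer (d + of_nat n) k"
    by (rule pochhammer_product')
  have split_e2: "pochhammer (e + 2) (n + k) = pochhammer (e + 2) k * pochhammer (e + 2 + of_nat k) n"
    using pochhammer_product'[of "e + 2" k n] by (simp add: add.commute)
  have split_e: "pochhammer e (n + k) = pochhammer e k * pochhammer (e + of_nat k) n"
    using pochhammer_product'[of e k n] by (simp add: add.commute)
  have split_f: "pochhammer (f + 1) (n + k) = pochhammer (f + 1) k * pochhammer (f + 1 + of_nat k) n"
    using pochhammer_product'[of "f + 1" k n] by (simp add: add.commute)
  have split_fact: "(fact (n + k) :: complex) = fact k * pochhammer (of_nat k + 1) n"
    using pochhammer_product'[of "1::complex" k n] by (simp add: pochhammer_fact add.commute)
  have nonzero: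
    "pochhammer (e + 2 + of_nat k) n \<noteq> 0"
    "pochhammer e k \<noteq> 0" "pochhammer (e + of_nat k) n \<noteq> 0"
    "pochhammer (f + 1) k \<noteq> 0" "pochhammer (f + 1 + of_nat k) n \<noteq> 0"
    "pochhammer (of_nat k + 1 :: complex) n \<noteq> 0"
    using e_reflected_nonzero refl4 e_nonzero split_e f_nonzero split_f split_fact
    by (metis mult_zero_left mult_zero_right fact_nonzero)+
  have lhs_term: "hyp_term [d + of_nat n, e + 2] [f + 1, e] x k
      = pochhammer (d + of_nat n) k * pochhammer (e + 2) k / (pochhammer (f + 1) k * pochhammer e k)
        * x ^ k / fact k"
    by (simp add: hyp_term_def)
  have rhs_term: "hyp_term ([- of_nat (n + k), 1 - e - of_nat (n + k), - f - of_nat (n + k)] @ as)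
                    ([-1 - e - of_nat (n + k)] @ bs) y n
      = pochhammer (- of_nat (n + k)) n * pochhammer (1 - e - of_nat (n + k)) n
        * pochhammer (- f - of_nat (n + k)) n * (\<Prod>a\<leftarrow>as. pochhammer a n)
        / (pochhammer (-1 - e - of_nat (n + k)) n * (\<Prod>b\<leftarrow>bs. pochhammer b n)) * y ^ n / fact n"
    unfolding hyp_term_def by (simp only: append_Cons append_Nil list.map prod_list.Cons mult.assoc)
  show ?thesis
    unfolding lhs_term rhs_term refl1 refl2 refl3 refl4 split_d split_e2 split_e split_f split_fact
      power_add
    using nonzero bs_nonzero by (simp add: field_simps)
qed

theorem mainTheorem8:
  fixes as bs :: "complex list" and d e f x y :: complex
  assumes bs_def: "\<forall>b\<in>set bs. \<forall>n. pochhammer b n \<noteq> 0"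
    and f_def: "\<forall>n. pochhammer (f + 1) n \<noteq> 0"
    and e_def: "\<forall>n. pochhammer e n \<noteq> 0"
    and e_def2: "\<forall>m j. j \<le> m \<longrightarrow> pochhammer (-1 - e - of_nat m) j \<noteq> 0"
    and conv_lhs: "(\<lambda>(n, k). (\<Prod>a\<leftarrow>as. pochhammer a n) * pochhammer d n * x ^ n * y ^ n
                       / ((\<Prod>b\<leftarrow>bs. pochhammer b n) * fact n)
                     * hyp_term [d + of_nat n, e + 2] [f + 1, e] x k) summable_on UNIV"
    and conv_rhs: "(\<lambda>(m, j). pochhammer d m * pochhammer (e + 2) m * x ^ m
                       / (pochhammer (f + 1) m * pochhammer e m * fact m)
                     * hyp_term ([- of_nat m, 1 - e - of_nat m, - f - of_nat m] @ as)
                                ([-1 - e - of_nat m] @ bs) y j) summable_on UNIV"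
  shows "(\<Sum>n. (\<Prod>a\<leftarrow>as. pochhammer a n) * pochhammer d n * x ^ n * y ^ n
                 / ((\<Prod>b\<leftarrow>bs. pochhammer b n) * fact n)
               * hypF [d + of_nat n, e + 2] [f + 1, e] x)
       = (\<Sum>n. pochhammer d n * pochhammer (e + 2) n * x ^ n
                 / (pochhammer (f + 1) n * pochhammer e n * fact n)
               * hypF ([- of_nat n, 1 - e - of_nat n, - f - of_nat n] @ as)
                      ([-1 - e - of_nat n] @ bs) y)"
proof -
  have terminating: "hyp_term ([- of_nat m, 1 - e - of_nat m, - f - of_nat m] @ as)
                       ([-1 - e - of_nat m] @ bs) y j = 0" if "m < j" for m j
    using pochhammer_of_nat_eq_0_lemma[OF that, where 'a = complex] by (simp add: hyp_term_def)
  have bs_nonzero: "(\<Prod>b\<leftarrow>bs. pochhammer b n) \<noteq> 0" for n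
    using bs_def by (auto simp: prod_list_zero_iff)
  have e_reflected_nonzero: "pochhammer (-1 - e - of_nat (n + k)) n \<noteq> 0" for n k
    using e_def2 le_add1 by blast
  let ?L = "\<lambda>(n, k). (\<Prod>a\<leftarrow>as. pochhammer a n) * pochhammer d n * x ^ n * y ^ n
               / ((\<Prod>b\<leftarrow>bs. pochhammer b n) * fact n)
             * hyp_term [d + of_nat n, e + 2] [f + 1, e] x k"
  let ?R = "\<lambda>(m, j). pochhammer d m * pochhammer (e + 2) m * x ^ m
               / (pochhammer (f + 1) m * pochhammer e m * fact m)
             * hyp_term ([- of_nat m, 1 - e - of_nat m, - f - of_nat m] @ as)
                        ([-1 - e - of_nat m] @ bs) y j"
  have "(\<Sum>\<^sub>\<infinity>p. ?R p) = (\<Sum>\<^sub>\<infinity>(n, k). ?R (n + k, n))"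
    by (rule infsum_lower_triangle_reindex) (simp only: terminating case_prod_conv mult_zero_right)
  also have "\<dots> = (\<Sum>\<^sub>\<infinity>p. ?L p)"
  proof (rule infsum_cong)
    fix p :: "nat \<times> nat"
    obtain n k where p: "p = (n, k)"
      by (cases p)
    show "(case p of (n, k) \<Rightarrow> ?R (n + k, n)) = ?L p"
      unfolding p case_prod_conv
      using hyp_term_reflection[OF bs_nonzero f_def[rule_format] e_def[rule_format] e_reflected_nonzero]
      by (rule sym)
  qed
  finally show ?thesis
    unfolding hypF_def
    unfolding suminf_cmult_suminf_eq_infsum[OF conv_lhs] suminf_cmult_suminf_eq_infsum[OF conv_rhs]
    by simp
qed

end
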